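(* For $g\geq1$ and $d\geq2$, $\mathcal{S}_g[d]$ is the normal closure in $\mathrm{urSp}(2g)$ of $Y_{1,1}^d$.
   Context: $\mathrm{urSp}(2g)$ is the subgroup of $\mathrm{Sp}(2g,\mathbb{Z})$ (defined via $J=\begin{pmatrix}0&I_g\\-I_g&0\end{pmatrix}$) consisting of matrices $\begin{pmatrix}A&B\\0&{}^tA^{-1}\end{pmatrix}$ with $A\in\mathrm{GL}(g,\mathbb{Z})$ and $A^{-1}B$ symmetric. $\mathcal{S}_g=\left\{\begin{pmatrix}I_g&B\\0&I_g\end{pmatrix} : B\text{ integral symmetric}\right\}$, and $\mathcal{S}_g[d]$ is the kernel of the restriction to $\mathcal{S}_g$ of the reduction map $\mathrm{Sp}(2g,\mathbb{Z})\to\mathrm{Sp}(2g,\mathbb{Z}/d\mathbb{Z})$ (i.e. those with $B\equiv0\bmod d$). $Y_{1,1}=\begin{pmatrix}I_g&S_{1,1}\\0&I_g\end{pmatrix}$ where $S_{1,1}$ is the $g\times g$ matrix with $(1,1)$-entry $1$ and other entries $0$. *)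

theory Defs
  imports "Jordan_Normal_Form.Matrix" "HOL-Algebra.Generated_Groups"
begin

definition Jsympl :: "nat \<Rightarrow> int mat" where
  "Jsympl g = four_block_mat (0\<^sub>m g g) (1\<^sub>m g) (- 1\<^sub>m g) (0\<^sub>m g g)"

definition Sp :: "nat \<Rightarrow> int mat set" where
  "Sp g = {M. M \<in> carrier_mat (2*g) (2*g) \<and> transpose_mat M * Jsympl g * M = Jsympl g}"

definition urSp :: "nat \<Rightarrow> int mat set" where
  "urSp g = {M. M \<in> Sp g \<and>
     (\<exists>A Ai B. A \<in> carrier_mat g g \<and> Ai \<in> carrier_mat g g \<and> B \<in> carrier_mat g g \<and>
        A * Ai = 1\<^sub>m g \<and> Ai * A = 1\<^sub>m g \<and>
        transpose_mat (Ai * B) = Ai * B \<and>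
        M = four_block_mat A B (0\<^sub>m g g) (transpose_mat Ai))}"

definition Sg :: "nat \<Rightarrow> int mat set" where
  "Sg g = {four_block_mat (1\<^sub>m g) B (0\<^sub>m g g) (1\<^sub>m g) | B.
             B \<in> carrier_mat g g \<and> transpose_mat B = B}"

definition Sg_level :: "nat \<Rightarrow> int \<Rightarrow> int mat set" where
  "Sg_level g d = {M \<in> Sg g. \<forall>i < 2*g. \<forall>j < 2*g. M $$ (i,j) mod d = (1\<^sub>m (2*g) :: int mat) $$ (i,j) mod d}"

definition S11 :: "nat \<Rightarrow> int mat" where
  "S11 g = mat g g (\<lambda>(i,j). if i = 0 \<and> j = 0 then 1 else 0)"

definition Y11 :: "nat \<Rightarrow> int mat" where
  "Y11 g = four_block_mat (1\<^sub>m g) (S11 g) (0\<^sub>m g g) (1\<^sub>m g)"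

definition urSp_group :: "nat \<Rightarrow> int mat monoid" where
  "urSp_group g = \<lparr>carrier = urSp g, mult = (*), one = 1\<^sub>m (2*g)\<rparr>"

definition normal_closure :: "('a, 'b) monoid_scheme \<Rightarrow> 'a set \<Rightarrow> 'a set" where
  "normal_closure G S = generate G {h \<otimes>\<^bsub>G\<^esub> s \<otimes>\<^bsub>G\<^esub> inv\<^bsub>G\<^esub> h | h s. h \<in> carrier G \<and> s \<in> S}"

end

theory Submission
  imports Defs "Jordan_Normal_Form.Gauss_Jordan_Elimination"
begin

text \<open>Conjugation by \<open>[[A, B], [0, (A\<^sup>T)\<^sup>-\<^sup>1]]\<close> in urSp(2g) acts on \<open>S\<^sub>g\<close> by
  \<open>X \<mapsto> A X A\<^sup>T\<close>, so the conjugates of \<open>Y\<^sub>1\<^sub>,\<^sub>1\<^sup>d\<close> have upper right block \<open>d v v\<^sup>T\<close>,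
  where \<open>v\<close> is the first column of some \<open>A \<in> GL(g, \<int>)\<close>. These lie in the abelian group
  \<open>S\<^sub>g[d]\<close>, hence so does the normal closure. Conversely, elementary row operations show that
  \<open>e\<^sub>i\<close> and \<open>e\<^sub>i + e\<^sub>j\<close> are such first columns, and
  \<open>(e\<^sub>i + e\<^sub>j)(e\<^sub>i + e\<^sub>j)\<^sup>T - e\<^sub>i e\<^sub>i\<^sup>T - e\<^sub>j e\<^sub>j\<^sup>T = e\<^sub>i e\<^sub>j\<^sup>T + e\<^sub>j e\<^sub>i\<^sup>T\<close>;
  subtracting these elementary symmetric matrices one at a time, with the sign of the
  entry they cancel, reduces every symmetric matrix to zero.\<close>

lemma mult_cancel_inverse_left:
  fixes A Ai Y :: "'a::semiring_1 mat"
  assumes "A \<in> carrier_mat n n" "Ai \<in> carrier_mat n n" "Y \<in> carrier_mat n n" "A * Ai = 1\<^sub>m n"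
  shows "A * (Ai * Y) = Y"
  using assms by (simp flip: assoc_mult_mat[of A n n Ai n Y n])

lemma mult_cancel_inverse_right:
  fixes A Ai Y :: "'a::semiring_1 mat"
  assumes "A \<in> carrier_mat n n" "Ai \<in> carrier_mat n n" "Y \<in> carrier_mat n n" "A * Ai = 1\<^sub>m n"
  shows "Y * A * Ai = Y"
  using assms by (simp add: assoc_mult_mat[of Y n n A n Ai n])

definition unipotent_upper :: "nat \<Rightarrow> 'a::semiring_1 mat \<Rightarrow> 'a mat" where
  "unipotent_upper n B = four_block_mat (1\<^sub>m n) B (0\<^sub>m n n) (1\<^sub>m n)"

lemma mult_upper_block_mat:
  fixes A B D :: "'a::semiring_1 mat"
  assumes "A \<in> carrier_mat n n" "B \<in> carrier_mat n n" "D \<in> carrier_mat n n"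
    "A' \<in> carrier_mat n n" "B' \<in> carrier_mat n n" "D' \<in> carrier_mat n n"
  shows "four_block_mat A B (0\<^sub>m n n) D * four_block_mat A' B' (0\<^sub>m n n) D'
     = four_block_mat (A * A') (A * B' + B * D') (0\<^sub>m n n) (D * D')"
  using assms by (simp add: mult_four_block_mat[of A n n B n _ n D A' n B' n _ D'])

lemma unipotent_upper_carrier: "B \<in> carrier_mat n n \<Longrightarrow> unipotent_upper n B \<in> carrier_mat (2*n) (2*n)"
  unfolding unipotent_upper_def by (metis four_block_carrier_mat one_carrier_mat mult_2)

lemma unipotent_upper_zero: "unipotent_upper n (0\<^sub>m n n) = 1\<^sub>m (2*n)"
  unfolding unipotent_upper_def by (metis four_block_one_mat mult_2)

lemma unipotent_upper_mult:
  fixes B C :: "'a::semiring_1 mat"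
  assumes "B \<in> carrier_mat n n" "C \<in> carrier_mat n n"
  shows "unipotent_upper n B * unipotent_upper n C = unipotent_upper n (B + C)"
  unfolding unipotent_upper_def using assms by (simp add: mult_upper_block_mat comm_add_mat[of B n n C])

lemma upper_block_mat_conj_unipotent:
  fixes A Ai B C :: "'a::comm_ring_1 mat"
  assumes c: "A \<in> carrier_mat n n" "Ai \<in> carrier_mat n n" "B \<in> carrier_mat n n" "C \<in> carrier_mat n n"
    and inv: "Ai * A = 1\<^sub>m n"
  shows "four_block_mat A B (0\<^sub>m n n) (transpose_mat Ai) * unipotent_upper n C
       = unipotent_upper n (A * C * transpose_mat A) * four_block_mat A B (0\<^sub>m n n) (transpose_mat Ai)"
proof -
  have "transpose_mat A * transpose_mat Ai = 1\<^sub>m n"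
    using c inv by (metis transpose_mult transpose_one)
  then have "C * transpose_mat A * transpose_mat Ai = C"
    using c by (simp add: mult_cancel_inverse_right)
  then have "A * (C * transpose_mat A) * transpose_mat Ai = A * C"
    using c by (simp add: assoc_mult_mat[of A n n _ n _ n])
  then show ?thesis
    unfolding unipotent_upper_def using c by (simp add: mult_upper_block_mat comm_add_mat[of B n n "A * C"])
qed

lemma upper_block_mat_in_Sp:
  fixes A B D :: "int mat"
  assumes c: "A \<in> carrier_mat n n" "B \<in> carrier_mat n n" "D \<in> carrier_mat n n"
    and AD: "transpose_mat A * D = 1\<^sub>m n" and BD: "transpose_mat B * D = transpose_mat D * B"
  shows "four_block_mat A B (0\<^sub>m n n) D \<in> Sp n"
proof -
  have DA: "transpose_mat D * A = 1\<^sub>m n"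
    using c AD by (metis transpose_mult transpose_one transpose_transpose transpose_carrier_mat)
  have neg_zero: "- 0\<^sub>m n n = (0\<^sub>m n n :: int mat)"
    by (rule eq_matI) auto
  have cancel: "- (transpose_mat D * B) + transpose_mat D * B = 0\<^sub>m n n"
    using c by (simp add: uminus_l_inv_mat[of _ n n])
  have "four_block_mat (transpose_mat A) (0\<^sub>m n n) (transpose_mat B) (transpose_mat D) * Jsympl n
      * four_block_mat A B (0\<^sub>m n n) D = Jsympl n"
    unfolding Jsympl_def using c AD BD DA
    by (simp add: mult_four_block_mat[of _ n n _ n _ n _ _ n _ n] neg_zero cancel)
  then show ?thesis
    unfolding Sp_def using c by (simp add: transpose_four_block_mat[of A n n B n _ n D] mult_2)
qed

lemma urSpI:
  assumes "M \<in> Sp n" "A \<in> carrier_mat n n" "Ai \<in> carrier_mat n n" "B \<in> carrier_mat n n"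
    "A * Ai = 1\<^sub>m n" "Ai * A = 1\<^sub>m n" "transpose_mat (Ai * B) = Ai * B"
    "M = four_block_mat A B (0\<^sub>m n n) (transpose_mat Ai)"
  shows "M \<in> urSp n"
  unfolding urSp_def using assms by blast

lemma urSp_carrier: "M \<in> urSp n \<Longrightarrow> M \<in> carrier_mat (2*n) (2*n)"
  unfolding urSp_def Sp_def by auto

lemma unipotent_upper_in_urSp:
  assumes "B \<in> carrier_mat n n" "transpose_mat B = B"
  shows "unipotent_upper n B \<in> urSp n"
proof (rule urSpI[of _ _ "1\<^sub>m n" "1\<^sub>m n" B])
  show "unipotent_upper n B \<in> Sp n"
    unfolding unipotent_upper_def by (rule upper_block_mat_in_Sp) (use assms in auto)
qed (use assms in \<open>auto simp: unipotent_upper_def\<close>)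

lemma block_diag_in_urSp:
  assumes c: "A \<in> carrier_mat n n" "Ai \<in> carrier_mat n n" and inv: "A * Ai = 1\<^sub>m n" "Ai * A = 1\<^sub>m n"
  shows "four_block_mat A (0\<^sub>m n n) (0\<^sub>m n n) (transpose_mat Ai) \<in> urSp n"
proof (rule urSpI)
  have "transpose_mat A * transpose_mat Ai = 1\<^sub>m n"
    using c inv by (metis transpose_mult transpose_one)
  then show "four_block_mat A (0\<^sub>m n n) (0\<^sub>m n n) (transpose_mat Ai) \<in> Sp n"
    using c by (intro upper_block_mat_in_Sp) auto
qed (use c inv in auto)

lemma urSp_inverse:
  assumes "M \<in> urSp n"
  shows "\<exists>N \<in> urSp n. M * N = 1\<^sub>m (2*n) \<and> N * M = 1\<^sub>m (2*n)"
proof -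
  obtain A Ai B where c: "A \<in> carrier_mat n n" "Ai \<in> carrier_mat n n" "B \<in> carrier_mat n n"
    and inv: "A * Ai = 1\<^sub>m n" "Ai * A = 1\<^sub>m n" and sym: "transpose_mat (Ai * B) = Ai * B"
    and M: "M = four_block_mat A B (0\<^sub>m n n) (transpose_mat Ai)"
    using assms unfolding urSp_def by blast
  have inv_t: "transpose_mat Ai * transpose_mat A = 1\<^sub>m n" "transpose_mat A * transpose_mat Ai = 1\<^sub>m n"
    using c inv by (metis transpose_mult transpose_one)+
  define X where "X = - (Ai * (B * transpose_mat A))"
  have X: "X \<in> carrier_mat n n" unfolding X_def using c by simp
  have AX: "A * X = - (B * transpose_mat A)"
    unfolding X_def using c inv by (simp add: mult_cancel_inverse_left)
  have XAi: "X * transpose_mat Ai = - (Ai * B)"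
    unfolding X_def using c inv_t
    by (simp add: assoc_mult_mat[of Ai n n _ n _ n] mult_cancel_inverse_right)
  have "A * transpose_mat B = A * (transpose_mat B * transpose_mat Ai) * transpose_mat A"
    using c inv_t by (simp add: assoc_mult_mat[of A n n _ n _ n] mult_cancel_inverse_right)
  also have "\<dots> = B * transpose_mat A"
    using sym c inv by (simp add: transpose_mult[of Ai n n B n] mult_cancel_inverse_left)
  finally have AX_sym: "transpose_mat (A * X) = A * X"
    unfolding AX using c by (simp add: transpose_mult[of B n n _ n] transpose_uminus)
  define N where "N = four_block_mat Ai X (0\<^sub>m n n) (transpose_mat A)"
  have "N \<in> urSp n"
  proof (rule urSpI[of _ _ Ai A X])
    show "N \<in> Sp n"
      unfolding N_def using c X inv_t AX_sym
      by (intro upper_block_mat_in_Sp) (auto simp: transpose_mult[of A n n X n])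
  qed (use c X inv AX_sym N_def in auto)
  moreover have "M * N = 1\<^sub>m (2*n)" "N * M = 1\<^sub>m (2*n)"
  proof -
    have cancel: "- (B * transpose_mat A) + B * transpose_mat A = 0\<^sub>m n n" "Ai * B + - (Ai * B) = 0\<^sub>m n n"
      using c by (auto simp: uminus_l_inv_mat[of _ n n] comm_add_mat[of "Ai * B" n n])
    then show "M * N = 1\<^sub>m (2*n)" "N * M = 1\<^sub>m (2*n)"
      unfolding M N_def using c X inv inv_t AX XAi
      by (simp_all add: mult_upper_block_mat cancel mult_2 flip: four_block_one_mat)
  qed
  ultimately show ?thesis by blast
qed

lemma urSp_group_simps [simp]:
  "carrier (urSp_group n) = urSp n" "mult (urSp_group n) = (*)" "one (urSp_group n) = 1\<^sub>m (2*n)"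
  unfolding urSp_group_def by auto

lemma urSp_group_inv_eqI:
  assumes "M \<in> urSp n" "N \<in> urSp n" "M * N = 1\<^sub>m (2*n)" "N * M = 1\<^sub>m (2*n)"
  shows "inv\<^bsub>urSp_group n\<^esub> M = N"
  unfolding m_inv_def urSp_group_simps
proof (rule the_equality)
  fix N' assume N': "N' \<in> urSp n \<and> M * N' = 1\<^sub>m (2*n) \<and> N' * M = 1\<^sub>m (2*n)"
  have c: "M \<in> carrier_mat (2*n) (2*n)" "N \<in> carrier_mat (2*n) (2*n)" "N' \<in> carrier_mat (2*n) (2*n)"
    using assms N' urSp_carrier by auto
  then have "N' = N * M * N'" using assms by simp
  also have "\<dots> = N" using N' c
    by (simp add: assoc_mult_mat[of N "2*n" "2*n" M "2*n" N' "2*n"])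
  finally show "N' = N" .
qed (use assms in auto)

lemma urSp_group_conj_unipotent:
  assumes M: "M \<in> urSp n" "M = four_block_mat A B (0\<^sub>m n n) (transpose_mat Ai)"
    and c: "A \<in> carrier_mat n n" "Ai \<in> carrier_mat n n" "B \<in> carrier_mat n n" "C \<in> carrier_mat n n"
    and inv: "Ai * A = 1\<^sub>m n"
  shows "M * unipotent_upper n C * inv\<^bsub>urSp_group n\<^esub> M = unipotent_upper n (A * C * transpose_mat A)"
proof -
  obtain N where N: "N \<in> urSp n" "M * N = 1\<^sub>m (2*n)" "N * M = 1\<^sub>m (2*n)"
    using urSp_inverse[OF M(1)] by blast
  have "M * unipotent_upper n C = unipotent_upper n (A * C * transpose_mat A) * M"
    unfolding M(2) by (rule upper_block_mat_conj_unipotent[OF c inv])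
  moreover have "M \<in> carrier_mat (2*n) (2*n)" "N \<in> carrier_mat (2*n) (2*n)"
    "unipotent_upper n (A * C * transpose_mat A) \<in> carrier_mat (2*n) (2*n)"
    using M(1) N(1) c by (auto simp: urSp_carrier unipotent_upper_carrier)
  ultimately show ?thesis
    using urSp_group_inv_eqI[OF M(1) N] N(2) by (simp add: assoc_mult_mat[of _ "2*n" "2*n" M "2*n" N "2*n"])
qed

lemma urSp_group_inv_unipotent:
  assumes "B \<in> carrier_mat n n" "transpose_mat B = B"
  shows "inv\<^bsub>urSp_group n\<^esub> (unipotent_upper n B) = unipotent_upper n (- B)"
proof -
  have "B + - B = 0\<^sub>m n n" "- B + B = 0\<^sub>m n n" using assms by (auto intro!: eq_matI)
  then show ?thesis
    using assms by (intro urSp_group_inv_eqI unipotent_upper_in_urSp)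
      (auto simp: unipotent_upper_mult unipotent_upper_zero transpose_uminus)
qed

lemma S11_carrier: "S11 n \<in> carrier_mat n n"
  unfolding S11_def by simp

lemma Y11_power: "Y11 n ^\<^sub>m k = unipotent_upper n (int k \<cdot>\<^sub>m S11 n)"
proof (induction k)
  case 0
  have "(0::int) \<cdot>\<^sub>m S11 n = 0\<^sub>m n n" by (rule eq_matI) (auto simp: S11_def)
  then show ?case by (simp add: unipotent_upper_zero Y11_def mult_2)
next
  case (Suc k)
  have "int k \<cdot>\<^sub>m S11 n + S11 n = int (Suc k) \<cdot>\<^sub>m S11 n"
    by (rule eq_matI) (auto simp: S11_def algebra_simps)
  then show ?case
    using Suc.IH S11_carrier
    by (simp add: Y11_def unipotent_upper_mult flip: unipotent_upper_def)
qed

lemma conj_smult_S11: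
  fixes A :: "int mat"
  assumes "A \<in> carrier_mat n n"
  shows "A * (k \<cdot>\<^sub>m S11 n) * transpose_mat A = k \<cdot>\<^sub>m mat n n (\<lambda>(a,b). A $$ (a,0) * A $$ (b,0))"
proof -
  have "A * (k \<cdot>\<^sub>m S11 n) = mat n n (\<lambda>(a,l). if l = 0 then k * A $$ (a,0) else 0)"
    using assms by (intro eq_matI) (auto simp: S11_def scalar_prod_def if_distrib[of "(*) _"] cong: if_cong)
  then show ?thesis
    using assms by (intro eq_matI) (auto simp: scalar_prod_def if_distrib[of "\<lambda>x. x * _"] cong: if_cong)
qed

lemma urSp_conj_Y11_power:
  assumes h: "h \<in> urSp n" "h = four_block_mat A B (0\<^sub>m n n) (transpose_mat Ai)"
    and c: "A \<in> carrier_mat n n" "Ai \<in> carrier_mat n n" "B \<in> carrier_mat n n"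
    and inv: "Ai * A = 1\<^sub>m n"
  shows "h * Y11 n ^\<^sub>m d * inv\<^bsub>urSp_group n\<^esub> h
    = unipotent_upper n (int d \<cdot>\<^sub>m mat n n (\<lambda>(a,b). A $$ (a,0) * A $$ (b,0)))"
  unfolding Y11_power
  using urSp_group_conj_unipotent[OF h c smult_carrier_mat[OF S11_carrier] inv]
  by (simp add: conj_smult_S11[OF c(1)])

definition divisible_sym_mat :: "nat \<Rightarrow> int \<Rightarrow> int mat \<Rightarrow> bool" where
  "divisible_sym_mat n d B \<longleftrightarrow>
     B \<in> carrier_mat n n \<and> transpose_mat B = B \<and> (\<forall>i<n. \<forall>j<n. d dvd B $$ (i,j))"

lemma Sg_level_eq: "Sg_level n d = unipotent_upper n ` Collect (divisible_sym_mat n d)"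
proof (intro equalityI subsetI)
  fix M assume M: "M \<in> Sg_level n d"
  then obtain B where B: "B \<in> carrier_mat n n" "transpose_mat B = B" and M_eq: "M = unipotent_upper n B"
    unfolding Sg_level_def Sg_def unipotent_upper_def by blast
  have "d dvd B $$ (i,j)" if "i < n" "j < n" for i j
  proof -
    have "M $$ (i, n + j) mod d = (1\<^sub>m (2*n) :: int mat) $$ (i, n + j) mod d"
      using M that unfolding Sg_level_def by auto
    then show ?thesis
      using that B unfolding M_eq unipotent_upper_def by (simp add: dvd_eq_mod_eq_0)
  qed
  then show "M \<in> unipotent_upper n ` Collect (divisible_sym_mat n d)"
    using B M_eq unfolding divisible_sym_mat_def by blast
next
  fix M assume "M \<in> unipotent_upper n ` Collect (divisible_sym_mat n d)"
  then obtain B where B: "B \<in> carrier_mat n n" "transpose_mat B = B" "\<forall>i<n. \<forall>j<n. d dvd B $$ (i,j)"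
    and M_eq: "M = unipotent_upper n B"
    unfolding divisible_sym_mat_def by blast
  have "M \<in> Sg n" unfolding Sg_def M_eq unipotent_upper_def using B by blast
  moreover have "M $$ (i,j) mod d = (1\<^sub>m (2*n) :: int mat) $$ (i,j) mod d" if "i < 2*n" "j < 2*n" for i j
  proof -
    have "i < n \<Longrightarrow> \<not> j < n \<Longrightarrow> B $$ (i, j - n) mod d = 0"
      using B(3) that by (simp add: dvd_eq_mod_eq_0[symmetric])
    then show ?thesis using that B unfolding M_eq unipotent_upper_def by auto
  qed
  ultimately show "M \<in> Sg_level n d" unfolding Sg_level_def by blast
qed

lemma urSp_conj_Y11_power_divisible:
  assumes "h \<in> urSp n"
  shows "\<exists>B. divisible_sym_mat n d B \<and> h * Y11 n ^\<^sub>m d * inv\<^bsub>urSp_group n\<^esub> h = unipotent_upper n B"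
proof -
  obtain A Ai B where c: "A \<in> carrier_mat n n" "Ai \<in> carrier_mat n n" "B \<in> carrier_mat n n"
    and inv: "Ai * A = 1\<^sub>m n" and h: "h = four_block_mat A B (0\<^sub>m n n) (transpose_mat Ai)"
    using assms unfolding urSp_def by blast
  have "divisible_sym_mat n d (int d \<cdot>\<^sub>m mat n n (\<lambda>(a,b). A $$ (a,0) * A $$ (b,0)))"
    unfolding divisible_sym_mat_def by (auto intro!: eq_matI)
  then show ?thesis
    unfolding urSp_conj_Y11_power[OF assms h c inv] by blast
qed

lemma normal_closure_Y11_power_subset_Sg_level:
  "normal_closure (urSp_group n) {Y11 n ^\<^sub>m d} \<subseteq> Sg_level n (int d)"
proof
  fix x assume "x \<in> normal_closure (urSp_group n) {Y11 n ^\<^sub>m d}"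
  then have "\<exists>B. divisible_sym_mat n d B \<and> x = unipotent_upper n B"
    unfolding normal_closure_def
  proof (induction rule: generate.induct)
    case one
    have "divisible_sym_mat n d (0\<^sub>m n n)" unfolding divisible_sym_mat_def by auto
    then show ?case by (auto simp: unipotent_upper_zero)
  next
    case (incl x)
    then show ?case using urSp_conj_Y11_power_divisible[of _ n d] by auto
  next
    case (inv x)
    then obtain B where "divisible_sym_mat n d B" "x = unipotent_upper n B"
      using urSp_conj_Y11_power_divisible[of _ n d] by auto
    then show ?case
      unfolding divisible_sym_mat_def
      by (auto simp: urSp_group_inv_unipotent transpose_uminus intro!: exI[of _ "- B"])
  next
    case (eng x y)
    then obtain B C where "divisible_sym_mat n d B" "x = unipotent_upper n B"
      "divisible_sym_mat n d C" "y = unipotent_upper n C"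
      by blast
    then show ?case
      unfolding divisible_sym_mat_def
      by (auto simp: unipotent_upper_mult transpose_add intro!: exI[of _ "B + C"])
  qed
  then show "x \<in> Sg_level n (int d)"
    unfolding Sg_level_eq by blast
qed

definition gl_first_column :: "nat \<Rightarrow> (nat \<Rightarrow> int) \<Rightarrow> bool" where
  "gl_first_column n v \<longleftrightarrow> (\<exists>A Ai. A \<in> carrier_mat n n \<and> Ai \<in> carrier_mat n n \<and>
     A * Ai = 1\<^sub>m n \<and> Ai * A = 1\<^sub>m n \<and> (\<forall>a<n. A $$ (a,0) = v a))"

lemma gl_first_column_cong:
  "gl_first_column n v \<Longrightarrow> (\<And>a. a < n \<Longrightarrow> v a = w a) \<Longrightarrow> gl_first_column n w"
  unfolding gl_first_column_def by metis

lemma gl_first_column_addrow: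
  assumes "gl_first_column n v" "l < n" "k < n" "l \<noteq> k"
  shows "gl_first_column n (\<lambda>a. if a = l then v a + c * v k else v a)"
proof -
  obtain A Ai where c: "A \<in> carrier_mat n n" "Ai \<in> carrier_mat n n"
    and inv: "A * Ai = 1\<^sub>m n" "Ai * A = 1\<^sub>m n" and v: "\<forall>a<n. A $$ (a,0) = v a"
    using assms(1) unfolding gl_first_column_def by blast
  define E where "E = addrow_mat n c l k"
  define E' where "E' = addrow_mat n (- c) l k"
  have E: "E \<in> carrier_mat n n" "E' \<in> carrier_mat n n" "E * E' = 1\<^sub>m n" "E' * E = 1\<^sub>m n"
    unfolding E_def E'_def using addrow_mat_inv[OF assms(2-4), of "- c"]
    by (auto simp: addrow_mat_inv[OF assms(2-4)])
  have "E * A * (Ai * E') = 1\<^sub>m n" "Ai * E' * (E * A) = 1\<^sub>m n"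
    using c E inv
    by (simp_all add: assoc_mult_mat[of _ n n _ n _ n] mult_cancel_inverse_left)
  moreover have "(E * A) $$ (a,0) = (if a = l then v a + c * v k else v a)" if "a < n" for a
    using that c v assms(2,3) unfolding E_def
    by (auto simp flip: addrow_mat[OF c(1) assms(3)])
  ultimately show ?thesis
    unfolding gl_first_column_def using c E by (intro exI[of _ "E * A"] exI[of _ "Ai * E'"]) auto
qed

lemma gl_first_column_unit:
  assumes "i < n"
  shows "gl_first_column n (\<lambda>a. if a = i then 1 else 0)"
proof -
  have e0: "gl_first_column n (\<lambda>a. if a = 0 then 1 else 0)"
    unfolding gl_first_column_def by (intro exI[of _ "1\<^sub>m n"]) auto
  show ?thesis
  proof (cases "i = 0")
    case True
    then show ?thesis using e0 by simp
  next
    case False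
    have n: "0 < n" using assms by simp
    have "gl_first_column n (\<lambda>a. if a = 0 \<or> a = i then 1 else 0)"
      by (rule gl_first_column_cong[OF gl_first_column_addrow[OF e0 assms n False, of 1]])
        (use False in auto)
    from gl_first_column_addrow[OF this n assms, of "- 1"]
    show ?thesis
      by (rule gl_first_column_cong) (use assms False in auto)
  qed
qed

lemma gl_first_column_unit_pair:
  assumes "i < n" "j < n" "i \<noteq> j"
  shows "gl_first_column n (\<lambda>a. (if a = i then 1 else 0) + (if a = j then 1 else 0))"
  by (rule gl_first_column_cong[OF gl_first_column_addrow[OF gl_first_column_unit[OF assms(1)]
        assms(2,1) assms(3)[symmetric], of 1]])
    (use assms in auto)

abbreviation Y11_power_closure :: "nat \<Rightarrow> nat \<Rightarrow> int mat set" where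
  "Y11_power_closure n d \<equiv> normal_closure (urSp_group n) {Y11 n ^\<^sub>m d}"

lemma Y11_power_closure_add:
  assumes "C \<in> carrier_mat n n" "C' \<in> carrier_mat n n"
    and "unipotent_upper n (int d \<cdot>\<^sub>m C) \<in> Y11_power_closure n d"
    and "unipotent_upper n (int d \<cdot>\<^sub>m C') \<in> Y11_power_closure n d"
  shows "unipotent_upper n (int d \<cdot>\<^sub>m (C + C')) \<in> Y11_power_closure n d"
proof -
  have "int d \<cdot>\<^sub>m (C + C') = int d \<cdot>\<^sub>m C + int d \<cdot>\<^sub>m C'"
    using assms(1,2) by (rule add_smult_distrib_left_mat)
  then show ?thesis
    using generate.eng[OF assms(3,4)[unfolded normal_closure_def]] assms(1,2)
    by (simp add: normal_closure_def unipotent_upper_mult)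
qed

lemma Y11_power_closure_rank_one:
  assumes "gl_first_column n v" "s = 1 \<or> s = -1"
  shows "unipotent_upper n (int d \<cdot>\<^sub>m mat n n (\<lambda>(a,b). s * (v a * v b))) \<in> Y11_power_closure n d"
proof -
  obtain A Ai where c: "A \<in> carrier_mat n n" "Ai \<in> carrier_mat n n"
    and inv: "A * Ai = 1\<^sub>m n" "Ai * A = 1\<^sub>m n" and v: "\<forall>a<n. A $$ (a,0) = v a"
    using assms(1) unfolding gl_first_column_def by blast
  define h where "h = four_block_mat A (0\<^sub>m n n) (0\<^sub>m n n) (transpose_mat Ai)"
  have h: "h \<in> urSp n"
    unfolding h_def by (rule block_diag_in_urSp[OF c inv])
  define x where "x = h * Y11 n ^\<^sub>m d * inv\<^bsub>urSp_group n\<^esub> h"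
  define V where "V = int d \<cdot>\<^sub>m mat n n (\<lambda>(a,b). v a * v b)"
  have "x = unipotent_upper n (int d \<cdot>\<^sub>m mat n n (\<lambda>(a,b). A $$ (a,0) * A $$ (b,0)))"
    unfolding x_def by (rule urSp_conj_Y11_power[OF h h_def c(1,2) zero_carrier_mat inv(2)])
  also have "mat n n (\<lambda>(a,b). A $$ (a,0) * A $$ (b,0)) = mat n n (\<lambda>(a,b). v a * v b)"
    using v by (intro eq_matI) auto
  finally have x_eq: "x = unipotent_upper n V"
    unfolding V_def .
  have x: "x \<in> {h \<otimes>\<^bsub>urSp_group n\<^esub> s \<otimes>\<^bsub>urSp_group n\<^esub> inv\<^bsub>urSp_group n\<^esub> h | h s.
      h \<in> carrier (urSp_group n) \<and> s \<in> {Y11 n ^\<^sub>m d}}"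
    unfolding x_def using h by auto
  text \<open>\<open>urSp_group\<close> is never shown to be a group, so \<open>generate\<close> provides inverses of
    generators only; this is why the sign \<open>s\<close> is carried along here.\<close>
  show ?thesis
    using assms(2)
  proof
    assume "s = 1"
    moreover have "x \<in> Y11_power_closure n d"
      unfolding normal_closure_def by (rule generate.incl[OF x])
    ultimately show ?thesis
      unfolding x_eq V_def by simp
  next
    assume "s = -1"
    then have "int d \<cdot>\<^sub>m mat n n (\<lambda>(a,b). s * (v a * v b)) = - V"
      unfolding V_def by (auto intro!: eq_matI)
    moreover have "inv\<^bsub>urSp_group n\<^esub> x \<in> Y11_power_closure n d"
      unfolding normal_closure_def by (rule generate.inv[OF x])
    moreover have "inv\<^bsub>urSp_group n\<^esub> x = unipotent_upper n (- V)"
      unfolding x_eq V_def by (rule urSp_group_inv_unipotent) (auto intro!: eq_matI)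
    ultimately show ?thesis by simp
  qed
qed

definition sym_unit_mat :: "nat \<Rightarrow> nat \<Rightarrow> nat \<Rightarrow> int mat" where
  "sym_unit_mat n i j = mat n n (\<lambda>(a,b). if (a = i \<and> b = j) \<or> (a = j \<and> b = i) then 1 else 0)"

lemma Y11_power_closure_sym_unit:
  assumes "i < n" "j < n" "s = 1 \<or> s = -1"
  shows "unipotent_upper n (int d \<cdot>\<^sub>m (s \<cdot>\<^sub>m sym_unit_mat n i j)) \<in> Y11_power_closure n d"
proof -
  define e :: "nat \<Rightarrow> nat \<Rightarrow> int" where "e k a = (if a = k then 1 else 0)" for k a
  have unit: "unipotent_upper n (int d \<cdot>\<^sub>m mat n n (\<lambda>(a,b). t * (e k a * e k b))) \<in> Y11_power_closure n d"
    if "k < n" "t = 1 \<or> t = -1" for k t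
    using Y11_power_closure_rank_one[OF gl_first_column_unit[OF that(1)] that(2)] by (simp add: e_def)
  show ?thesis
  proof (cases "i = j")
    case True
    have "s \<cdot>\<^sub>m sym_unit_mat n i j = mat n n (\<lambda>(a,b). s * (e i a * e i b))"
      using True by (intro eq_matI) (auto simp: sym_unit_mat_def e_def)
    then show ?thesis using unit[OF assms(1,3)] by simp
  next
    case False
    define t where "t = - s"
    have t: "t = 1 \<or> t = -1" using assms(3) t_def by auto
    have "s \<cdot>\<^sub>m sym_unit_mat n i j = mat n n (\<lambda>(a,b). s * ((e i a + e j a) * (e i b + e j b)))
        + mat n n (\<lambda>(a,b). t * (e i a * e i b)) + mat n n (\<lambda>(a,b). t * (e j a * e j b))"
      using False unfolding t_def by (intro eq_matI) (auto simp: sym_unit_mat_def e_def algebra_simps)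
    moreover have "unipotent_upper n (int d \<cdot>\<^sub>m mat n n (\<lambda>(a,b). s * ((e i a + e j a) * (e i b + e j b))))
        \<in> Y11_power_closure n d"
      using Y11_power_closure_rank_one[OF gl_first_column_unit_pair[OF assms(1,2) False] assms(3)]
      by (simp add: e_def)
    ultimately show ?thesis
      using unit[OF assms(1) t] unit[OF assms(2) t]
      by (simp add: Y11_power_closure_add[of _ n])
  qed
qed

definition abs_entry_sum :: "nat \<Rightarrow> int mat \<Rightarrow> nat" where
  "abs_entry_sum n C = (\<Sum>p\<in>{0..<n} \<times> {0..<n}. nat \<bar>C $$ p\<bar>)"

lemma abs_entry_sum_sym_unit_less:
  assumes C: "C \<in> carrier_mat n n" "transpose_mat C = C" and ij: "i < n" "j < n" "C $$ (i,j) \<noteq> 0"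
  shows "abs_entry_sum n (C - sgn (C $$ (i,j)) \<cdot>\<^sub>m sym_unit_mat n i j) < abs_entry_sum n C"
  unfolding abs_entry_sum_def
proof (rule sum_strict_mono_ex1)
  have sym: "C $$ (j,i) = C $$ (i,j)"
    using C ij by (metis index_transpose_mat(1) carrier_matD)
  then have entry: "(C - sgn (C $$ (i,j)) \<cdot>\<^sub>m sym_unit_mat n i j) $$ (a,b)
      = (if (a = i \<and> b = j) \<or> (a = j \<and> b = i) then C $$ (i,j) - sgn (C $$ (i,j)) else C $$ (a,b))"
    if "a < n" "b < n" for a b
    using that C by (auto simp: sym_unit_mat_def)
  have less: "nat \<bar>C $$ (i,j) - sgn (C $$ (i,j))\<bar> < nat \<bar>C $$ (i,j)\<bar>"
    using ij(3) by (cases "C $$ (i,j) > 0") (auto simp: sgn_if)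
  then show "\<exists>p\<in>{0..<n} \<times> {0..<n}. nat \<bar>(C - sgn (C $$ (i,j)) \<cdot>\<^sub>m sym_unit_mat n i j) $$ p\<bar> < nat \<bar>C $$ p\<bar>"
    using ij by (intro bexI[of _ "(i,j)"]) (auto simp: entry)
  show "\<forall>p\<in>{0..<n} \<times> {0..<n}. nat \<bar>(C - sgn (C $$ (i,j)) \<cdot>\<^sub>m sym_unit_mat n i j) $$ p\<bar> \<le> nat \<bar>C $$ p\<bar>"
    using less sym by (auto simp: entry)
qed simp

lemma Y11_power_closure_sym:
  assumes "C \<in> carrier_mat n n" "transpose_mat C = C"
  shows "unipotent_upper n (int d \<cdot>\<^sub>m C) \<in> Y11_power_closure n d"
  using assms
proof (induction "abs_entry_sum n C" arbitrary: C rule: less_induct)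
  case less
  have sym: "C $$ (b,a) = C $$ (a,b)" if "a < n" "b < n" for a b
    using less.prems that by (metis index_transpose_mat(1) carrier_matD)
  show ?case
  proof (cases "\<exists>i<n. \<exists>j<n. C $$ (i,j) \<noteq> 0")
    case False
    then have "int d \<cdot>\<^sub>m C = 0\<^sub>m n n"
      using less.prems by (intro eq_matI) auto
    then show ?thesis
      using generate.one[of "urSp_group n"] by (simp add: normal_closure_def unipotent_upper_zero)
  next
    case True
    then obtain i j where ij: "i < n" "j < n" "C $$ (i,j) \<noteq> 0" by blast
    define R where "R = sgn (C $$ (i,j)) \<cdot>\<^sub>m sym_unit_mat n i j"
    have R: "R \<in> carrier_mat n n" unfolding R_def sym_unit_mat_def by simp
    have "unipotent_upper n (int d \<cdot>\<^sub>m (C - R)) \<in> Y11_power_closure n d"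
    proof (rule less.hyps)
      show "abs_entry_sum n (C - R) < abs_entry_sum n C"
        unfolding R_def by (rule abs_entry_sum_sym_unit_less[OF less.prems ij])
      show "transpose_mat (C - R) = C - R"
        using less.prems(1) sym unfolding R_def sym_unit_mat_def by (intro eq_matI) auto
    qed (use less.prems R in auto)
    moreover have "unipotent_upper n (int d \<cdot>\<^sub>m R) \<in> Y11_power_closure n d"
      unfolding R_def using ij by (intro Y11_power_closure_sym_unit) (auto simp: sgn_if)
    ultimately have "unipotent_upper n (int d \<cdot>\<^sub>m ((C - R) + R)) \<in> Y11_power_closure n d"
      using less.prems(1) R by (intro Y11_power_closure_add) auto
    moreover have "(C - R) + R = C"
      using less.prems(1) R by (intro eq_matI) auto
    ultimately show ?thesis by simp
  qed
qed

lemma Sg_level_subset_normal_closure_Y11_power: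
  "Sg_level n (int d) \<subseteq> normal_closure (urSp_group n) {Y11 n ^\<^sub>m d}"
proof
  fix M assume "M \<in> Sg_level n (int d)"
  then obtain B where B: "divisible_sym_mat n (int d) B" and M: "M = unipotent_upper n B"
    unfolding Sg_level_eq by blast
  have sym: "B $$ (b,a) = B $$ (a,b)" if "a < n" "b < n" for a b
    using B that unfolding divisible_sym_mat_def by (metis index_transpose_mat(1) carrier_matD)
  define C where "C = mat n n (\<lambda>p. B $$ p div int d)"
  have "B = int d \<cdot>\<^sub>m C"
    using B unfolding C_def divisible_sym_mat_def by (intro eq_matI) auto
  moreover have "transpose_mat C = C"
    unfolding C_def using sym by (intro eq_matI) auto
  ultimately show "M \<in> normal_closure (urSp_group n) {Y11 n ^\<^sub>m d}"
    unfolding M using Y11_power_closure_sym[of C n d] by (simp add: C_def)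
qed

theorem corollary3p9:
  fixes g :: nat and d :: nat
  assumes "g \<ge> 1" and "d \<ge> 2"
  shows "Sg_level g (int d) = normal_closure (urSp_group g) {Y11 g ^\<^sub>m d}"
  using Sg_level_subset_normal_closure_Y11_power normal_closure_Y11_power_subset_Sg_level
  by (rule equalityI)

end
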